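(* Let $\widetilde{\mathsf{Op}}$ be the GPT associated with an operational theory. Then $\widetilde{\mathsf{Op}}$ is tomographically local if and only if, for every system $A$, every linearly independent spanning set of states $\{\widetilde P^A_j\}_{j=1}^{m^A}$ and every linearly independent spanning set of effects $\{\widetilde E^A_i\}_{i=1}^{m^A}$, the $m^A\times m^A$ matrix $\mathbf{N}_{\widetilde{\mathbb 1}_A}$ with entries $(\mathbf{N}_{\widetilde{\mathbb 1}_A})_{j,i}:=\widetilde E^A_j\circ\widetilde P^A_i$ is invertible and, writing $\mathbf{M}_{\widetilde{\mathbb 1}_A}:=\mathbf{N}_{\widetilde{\mathbb 1}_A}^{-1}$, the identity process on $A$ decomposes as $$\widetilde{\mathbb 1}_A=\sum_{i,j=1}^{m^A}(\mathbf{M}_{\widetilde{\mathbb 1}_A})_{j,i}\;\widetilde P^A_j\circ\widetilde E^A_i .$$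
   Context: A process theory consists of systems (closed under composition $\otimes$, with trivial system $I$) and processes, closed under sequential composition $\circ$ and parallel composition $\otimes$, with identities; processes $I\to A$ are states, $A\to I$ effects. An operational theory is a process theory of procedures with a probability rule $p$ assigning each closed diagram a value in $[0,1]$; two procedures of the same type are operationally equivalent if they yield equal probabilities when plugged into any tester $\tau=(s,e,W)$ ($s:I\to A\otimes W$, $e:B\otimes W\to I$, yielding $e\circ(T\otimes\mathrm{id}_W)\circ s$); finitely many testers suffice for each type. The associated GPT $\widetilde{\mathsf{Op}}$ has as processes the equivalence classes, composed via representatives; closed diagrams are real numbers (probabilities); each class of type $A\to B$ is identified with its vector of probabilities on a finite tomographically complete set of testers, so linear combinations of processes of a given type are elements of a finite-dimensional real vector space, and sequential and parallel composition extend bilinearly to these linear combinations. For a system $A$, the states of $A$ span a finite-dimensional vector space of dimension $m^A$ and the effects on $A$ span a space of the same dimension; a "linearly independent spanning set" of states (effects) is a basis of this span consisting of states (effects). For an effect $E$ on $A$ and a state $P$ of $B$, $P\circ E$ denotes the process $A\to B$ obtained by sequential composition through the trivial system. $\widetilde{\mathsf{Op}}$ is tomographically local if any two processes of the same type (possibly with several input systems $A_1,\dots$ and output systems $B_1,\dots$) that give equal probabilities when composed with all products of states on their inputs and all products of effects on their outputs are equal. *)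

theory Defs
  imports Main "Jordan_Normal_Form.Matrix"
begin

text \<open>Systems have type 's, procedures type 'p.  seqc g f is the sequential
composition "g after f" (g o f), defined when cod f = dom g; parc is the
parallel composition; idp A the identity on A; unitS the trivial system I;
prob assigns a probability to every closed diagram (procedure I -> I).\<close>

record ('s, 'p) optheory =
  unitS :: 's
  tensS :: "'s \<Rightarrow> 's \<Rightarrow> 's"
  dom   :: "'p \<Rightarrow> 's"
  cod   :: "'p \<Rightarrow> 's"
  seqc  :: "'p \<Rightarrow> 'p \<Rightarrow> 'p"
  parc  :: "'p \<Rightarrow> 'p \<Rightarrow> 'p"
  idp   :: "'s \<Rightarrow> 'p"
  prob  :: "'p \<Rightarrow> real"

definition hom :: "('s, 'p) optheory \<Rightarrow> 's \<Rightarrow> 's \<Rightarrow> 'p set" where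
  "hom Th A B = {T. dom Th T = A \<and> cod Th T = B}"

definition process_theory :: "('s, 'p) optheory \<Rightarrow> bool" where
  "process_theory Th \<longleftrightarrow>
     (\<forall>f g. cod Th f = dom Th g \<longrightarrow>
        dom Th (seqc Th g f) = dom Th f \<and> cod Th (seqc Th g f) = cod Th g) \<and>
     (\<forall>f g. dom Th (parc Th f g) = tensS Th (dom Th f) (dom Th g) \<and>
            cod Th (parc Th f g) = tensS Th (cod Th f) (cod Th g)) \<and>
     (\<forall>A. dom Th (idp Th A) = A \<and> cod Th (idp Th A) = A) \<and>
     (\<forall>f g h. cod Th f = dom Th g \<longrightarrow> cod Th g = dom Th h \<longrightarrow>
        seqc Th h (seqc Th g f) = seqc Th (seqc Th h g) f) \<and>
     (\<forall>f. seqc Th (idp Th (cod Th f)) f = f \<and> seqc Th f (idp Th (dom Th f)) = f) \<and>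
     (\<forall>A B C. tensS Th A (tensS Th B C) = tensS Th (tensS Th A B) C) \<and>
     (\<forall>A. tensS Th (unitS Th) A = A \<and> tensS Th A (unitS Th) = A) \<and>
     (\<forall>f g h. parc Th f (parc Th g h) = parc Th (parc Th f g) h) \<and>
     (\<forall>f. parc Th (idp Th (unitS Th)) f = f \<and> parc Th f (idp Th (unitS Th)) = f) \<and>
     (\<forall>f g f' g'. cod Th f = dom Th g \<longrightarrow> cod Th f' = dom Th g' \<longrightarrow>
        parc Th (seqc Th g f) (seqc Th g' f') = seqc Th (parc Th g g') (parc Th f f')) \<and>
     (\<forall>A B. idp Th (tensS Th A B) = parc Th (idp Th A) (idp Th B))"

definition testers :: "('s, 'p) optheory \<Rightarrow> 's \<Rightarrow> 's \<Rightarrow> ('p \<times> 'p \<times> 's) set" where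
  "testers Th A B = {(s, e, W). s \<in> hom Th (unitS Th) (tensS Th A W) \<and>
                               e \<in> hom Th (tensS Th B W) (unitS Th)}"

definition tpr :: "('s, 'p) optheory \<Rightarrow> ('p \<times> 'p \<times> 's) \<Rightarrow> 'p \<Rightarrow> real" where
  "tpr Th \<tau> T = (case \<tau> of (s, e, W) \<Rightarrow>
      prob Th (seqc Th e (seqc Th (parc Th T (idp Th W)) s)))"

text \<open>Formal (finite) real linear combinations of procedures; they denote
elements of the GPT's vector spaces via their tester-probability vectors.\<close>
type_synonym 'p lincomb = "(real \<times> 'p) list"

definition lc_ok :: "('s, 'p) optheory \<Rightarrow> 's \<Rightarrow> 's \<Rightarrow> 'p lincomb \<Rightarrow> bool" where
  "lc_ok Th A B L \<longleftrightarrow> (\<forall>(c, T) \<in> set L. T \<in> hom Th A B)"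

definition lc_val :: "('p \<Rightarrow> real) \<Rightarrow> 'p lincomb \<Rightarrow> real" where
  "lc_val f L = sum_list (map (\<lambda>(c, T). c * f T) L)"

text \<open>Equality in the GPT of two linear combinations of type A -> B:
equal probabilities on every tester (operational equivalence).\<close>
definition gpt_eq :: "('s, 'p) optheory \<Rightarrow> 's \<Rightarrow> 's \<Rightarrow> 'p lincomb \<Rightarrow> 'p lincomb \<Rightarrow> bool" where
  "gpt_eq Th A B L L' \<longleftrightarrow> (\<forall>\<tau> \<in> testers Th A B. lc_val (tpr Th \<tau>) L = lc_val (tpr Th \<tau>) L')"

definition operational_theory :: "('s, 'p) optheory \<Rightarrow> bool" where
  "operational_theory Th \<longleftrightarrow>
     process_theory Th \<and>
     (\<forall>f \<in> hom Th (unitS Th) (unitS Th). 0 \<le> prob Th f \<and> prob Th f \<le> 1) \<and>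
     (\<forall>f \<in> hom Th (unitS Th) (unitS Th). \<forall>g \<in> hom Th (unitS Th) (unitS Th).
        prob Th (parc Th f g) = prob Th f * prob Th g) \<and>
     (\<forall>A B. \<exists>F. finite F \<and> F \<subseteq> testers Th A B \<and>
        (\<forall>L. lc_ok Th A B L \<longrightarrow> (\<forall>\<tau> \<in> F. lc_val (tpr Th \<tau>) L = 0) \<longrightarrow>
             gpt_eq Th A B L []))"

definition tensL :: "('s, 'p) optheory \<Rightarrow> 's list \<Rightarrow> 's" where
  "tensL Th As = foldr (tensS Th) As (unitS Th)"

definition parL :: "('s, 'p) optheory \<Rightarrow> 'p list \<Rightarrow> 'p" where
  "parL Th Ts = foldr (parc Th) Ts (idp Th (unitS Th))"

definition tomographically_local :: "('s, 'p) optheory \<Rightarrow> bool" where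
  "tomographically_local Th \<longleftrightarrow>
     (\<forall>As Bs L L'. lc_ok Th (tensL Th As) (tensL Th Bs) L \<longrightarrow> lc_ok Th (tensL Th As) (tensL Th Bs) L' \<longrightarrow>
        (\<forall>Ps Es. length Ps = length As \<longrightarrow> (\<forall>k < length As. Ps ! k \<in> hom Th (unitS Th) (As ! k)) \<longrightarrow>
                 length Es = length Bs \<longrightarrow> (\<forall>k < length Bs. Es ! k \<in> hom Th (Bs ! k) (unitS Th)) \<longrightarrow>
            lc_val (\<lambda>T. prob Th (seqc Th (parL Th Es) (seqc Th T (parL Th Ps)))) L =
            lc_val (\<lambda>T. prob Th (seqc Th (parL Th Es) (seqc Th T (parL Th Ps)))) L') \<longrightarrow>
        gpt_eq Th (tensL Th As) (tensL Th Bs) L L')"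

definition lin_indep_spanning :: "('s, 'p) optheory \<Rightarrow> 's \<Rightarrow> 's \<Rightarrow> nat \<Rightarrow> (nat \<Rightarrow> 'p) \<Rightarrow> bool" where
  "lin_indep_spanning Th A B m Ps \<longleftrightarrow>
     (\<forall>j < m. Ps j \<in> hom Th A B) \<and>
     (\<forall>c. gpt_eq Th A B (map (\<lambda>j. (c j, Ps j)) [0..<m]) [] \<longrightarrow> (\<forall>j < m. c j = 0)) \<and>
     (\<forall>P \<in> hom Th A B. \<exists>c. gpt_eq Th A B [(1, P)] (map (\<lambda>j. (c j, Ps j)) [0..<m]))"

definition lin_indep_spanning_states where
  "lin_indep_spanning_states Th A m Ps = lin_indep_spanning Th (unitS Th) A m Ps"

definition lin_indep_spanning_effects where
  "lin_indep_spanning_effects Th A m Es = lin_indep_spanning Th A (unitS Th) m Es"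

definition Nmat :: "('s, 'p) optheory \<Rightarrow> nat \<Rightarrow> (nat \<Rightarrow> 'p) \<Rightarrow> (nat \<Rightarrow> 'p) \<Rightarrow> real mat" where
  "Nmat Th m Ps Es = mat m m (\<lambda>(j, i). prob Th (seqc Th (Es j) (Ps i)))"

definition id_expansion :: "('s, 'p) optheory \<Rightarrow> nat \<Rightarrow> real mat \<Rightarrow> (nat \<Rightarrow> 'p) \<Rightarrow> (nat \<Rightarrow> 'p) \<Rightarrow> 'p lincomb" where
  "id_expansion Th m M Ps Es =
     concat (map (\<lambda>j. map (\<lambda>i. (M $$ (j, i), seqc Th (Ps j) (Es i))) [0..<m]) [0..<m])"

end

theory Submission
  imports Defs "Jordan_Normal_Form.Determinant"
begin

text \<open>States and effects of a system are only ever compared through the probabilities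
  \<open>E \<circ> P\<close>, so linear independence and spanning are statements about this real pairing.
  A nonsingular square \<open>(E\<^sub>j \<circ> P\<^sub>i)\<close> of maximal size, which exists because finitely many
  testers are tomographically complete, yields bases of states and of effects, and for any such
  bases the matrix \<open>N\<close> is invertible. If the theory is tomographically local, the two sides of the
  expansion of the identity agree on product states and effects, where the claim reduces to
  \<open>N M N = N\<close>. Conversely, expansions of the identity on single systems multiply to expansions
  on composite systems into product states and effects; inserting them on both sides of a process
  \<open>T\<close> writes \<open>T\<close> as a combination of rank-one processes \<open>P \<circ> E'\<close> with coefficients
  \<open>E \<circ> T \<circ> P'\<close>, so \<open>T\<close> is determined by probabilities of product states and effects.\<close>

section \<open>Square matrices given by entry functions\<close>

lemma index_mult_mat_vec_mat:
  assumes "j < n" and "v \<in> carrier_vec n"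
  shows "(mat n n (\<lambda>(j, i). f j i) *\<^sub>v v) $ j = (\<Sum>i<n. f j i * v $ i)"
  using assms by (simp add: scalar_prod_def atLeast0LessThan)

lemma det_mat_nonzero_iff_kernel:
  fixes f :: "nat \<Rightarrow> nat \<Rightarrow> 'a :: idom"
  shows "det (mat n n (\<lambda>(j, i). f j i)) \<noteq> 0 \<longleftrightarrow>
    (\<forall>x. (\<forall>j<n. (\<Sum>i<n. f j i * x i) = 0) \<longrightarrow> (\<forall>i<n. x i = 0))"
proof -
  let ?A = "mat n n (\<lambda>(j, i). f j i)"
  have entry: "(?A *\<^sub>v vec n x) $ j = (\<Sum>i<n. f j i * x i)" if "j < n" for x j
    unfolding index_mult_mat_vec_mat[OF that vec_carrier] by (auto intro: sum.cong)
  have kernel: "?A *\<^sub>v vec n x = 0\<^sub>v n \<longleftrightarrow> (\<forall>j<n. (\<Sum>i<n. f j i * x i) = 0)" for x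
    by (auto simp: vec_eq_iff entry simp del: index_mult_mat_vec)
  have zero: "vec n x = 0\<^sub>v n \<longleftrightarrow> (\<forall>i<n. x i = 0)" for x
    by (auto simp: vec_eq_iff)
  have "det ?A = 0 \<longleftrightarrow> (\<exists>x. ?A *\<^sub>v vec n x = 0\<^sub>v n \<and> vec n x \<noteq> 0\<^sub>v n)"
    unfolding det_0_iff_vec_prod_zero[of ?A n, simplified]
    by (metis (no_types) eq_vecI carrier_vecD dim_vec index_vec vec_carrier)
  then show ?thesis unfolding kernel zero by blast
qed

lemma det_mat_zero_row:
  assumes "k < n" and "\<forall>i<n. f k i = 0"
  shows "det (mat n n (\<lambda>(j, i). f j i)) = 0"
proof -
  let ?A = "mat n n (\<lambda>(j, i). f j i)"
  have "mat\<^sub>r n n (\<lambda>r. if r = k then 0\<^sub>v n else row ?A r) = ?A"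
    by (rule eq_matI) (use assms in auto)
  moreover have "det (mat\<^sub>r n n (\<lambda>r. if r = k then 0\<^sub>v n else row ?A r)) = 0"
    by (rule det_row_0[OF assms(1)]) auto
  ultimately show ?thesis by simp
qed

lemma det_mat_swap_indices:
  "det (mat n n (\<lambda>(j, i). f i j)) = det (mat n n (\<lambda>(j, i). f j i))"
proof -
  have "mat n n (\<lambda>(j, i). f i j) = transpose_mat (mat n n (\<lambda>(j, i). f j i))"
    by (rule eq_matI) auto
  then show ?thesis using det_transpose[of "mat n n (\<lambda>(j, i). f j i)" n] by simp
qed

lemma det_nonzero_imp_inverse:
  fixes A :: "'a :: field mat"
  assumes "A \<in> carrier_mat n n" and "det A \<noteq> 0"
  shows "\<exists>B \<in> carrier_mat n n. A * B = 1\<^sub>m n \<and> B * A = 1\<^sub>m n"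
  using det_non_zero_imp_unit[OF assms, of "()"] unfolding Units_def ring_mat_def by auto

lemma invertible_mat_if_det_nonzero:
  fixes A :: "'a :: field mat"
  assumes "A \<in> carrier_mat n n" and "det A \<noteq> 0"
  shows "invertible_mat A"
  using det_nonzero_imp_inverse[OF assms] assms(1)
  unfolding invertible_mat_def inverts_mat_def by auto

lemma det_mat_nonzero_imp_solvable:
  fixes f :: "nat \<Rightarrow> nat \<Rightarrow> 'a :: field"
  assumes "det (mat n n (\<lambda>(j, i). f j i)) \<noteq> 0"
  shows "\<exists>x. \<forall>j<n. (\<Sum>i<n. f j i * x i) = a j"
proof -
  let ?A = "mat n n (\<lambda>(j, i). f j i)"
  obtain B where B: "B \<in> carrier_mat n n" "?A * B = 1\<^sub>m n"
    using det_nonzero_imp_inverse[OF mat_carrier assms] by auto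
  let ?y = "B *\<^sub>v vec n a"
  have y: "?y \<in> carrier_vec n"
    using B(1) by simp
  have "?A *\<^sub>v ?y = vec n a"
    using B by (subst assoc_mult_mat_vec[symmetric]) auto
  then have "\<forall>j<n. (\<Sum>i<n. f j i * ?y $ i) = a j"
    using index_mult_mat_vec_mat[OF _ y, of _ f] by (metis index_vec)
  then show ?thesis by blast
qed

lemma det_mat_bordered_nonzero:
  fixes f :: "nat \<Rightarrow> nat \<Rightarrow> 'a :: field"
  assumes nonsingular: "det (mat m m (\<lambda>(j, i). f j i)) \<noteq> 0"
    and column: "\<forall>j<m. (\<Sum>i<m. f j i * x i) = f j m"
    and row: "f m m \<noteq> (\<Sum>i<m. f m i * x i)"
  shows "det (mat (Suc m) (Suc m) (\<lambda>(j, i). f j i)) \<noteq> 0"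
  unfolding det_mat_nonzero_iff_kernel
proof (rule allI, rule impI)
  fix v assume v: "\<forall>j<Suc m. (\<Sum>i<Suc m. f j i * v i) = 0"
  define w where "w i = v i + v m * x i" for i
  have "\<forall>j<m. (\<Sum>i<m. f j i * w i) = 0"
  proof (intro allI impI)
    fix j assume "j < m"
    have "(\<Sum>i<m. f j i * w i) = (\<Sum>i<m. f j i * v i) + v m * (\<Sum>i<m. f j i * x i)"
      by (simp add: w_def algebra_simps sum.distrib sum_distrib_left)
    also have "\<dots> = (\<Sum>i<Suc m. f j i * v i)"
      using column \<open>j < m\<close> by (simp add: mult.commute)
    also have "\<dots> = 0"
      using v \<open>j < m\<close> by simp
    finally show "(\<Sum>i<m. f j i * w i) = 0" .
  qed
  then have "\<forall>i<m. w i = 0"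
    using nonsingular unfolding det_mat_nonzero_iff_kernel by blast
  then have shifted: "\<forall>i<m. v i = - v m * x i"
    by (simp add: w_def eq_neg_iff_add_eq_0)
  have row_m: "(\<Sum>i<m. f m i * v i) = (\<Sum>i<m. f m i * (- v m * x i))"
    using shifted by (intro sum.cong) auto
  have "0 = (\<Sum>i<Suc m. f m i * v i)"
    using v by simp
  also have "\<dots> = (\<Sum>i<m. f m i * v i) + f m m * v m"
    by simp
  also have "\<dots> = v m * (f m m - (\<Sum>i<m. f m i * x i))"
    unfolding row_m by (simp add: algebra_simps sum_distrib_left sum_negf)
  finally have "v m = 0"
    using row by simp
  then show "\<forall>i<Suc m. v i = 0"
    using shifted by (auto simp: less_Suc_eq)
qed

lemma bilinear_form_right_inverse:
  fixes N M :: "nat \<Rightarrow> nat \<Rightarrow> 'a :: comm_ring_1"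
  assumes right_inverse: "\<And>l i. l < m \<Longrightarrow> i < m \<Longrightarrow> (\<Sum>j<m. N l j * M j i) = (if l = i then 1 else 0)"
  shows "(\<Sum>j<m. \<Sum>i<m. M j i * (\<Sum>l<m. a l * N l j) * (\<Sum>k<m. N i k * b k)) =
         (\<Sum>l<m. a l * (\<Sum>k<m. N l k * b k))"
proof -
  define S where "S i = (\<Sum>k<m. N i k * b k)" for i
  have "(\<Sum>j<m. \<Sum>i<m. M j i * (\<Sum>l<m. a l * N l j) * S i) =
        (\<Sum>j<m. \<Sum>i<m. \<Sum>l<m. a l * S i * (N l j * M j i))"
    by (simp add: sum_distrib_left sum_distrib_right mult_ac)
  also have "\<dots> = (\<Sum>i<m. \<Sum>l<m. \<Sum>j<m. a l * S i * (N l j * M j i))"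
    by (subst sum.swap) (rule sum.cong[OF refl], rule sum.swap)
  also have "\<dots> = (\<Sum>i<m. \<Sum>l<m. if l = i then a l * S i else 0)"
    by (intro sum.cong refl) (simp add: right_inverse flip: sum_distrib_left)
  also have "\<dots> = (\<Sum>i<m. a i * S i)"
    by (rule sum.cong[OF refl]) (simp add: sum.delta)
  finally show ?thesis
    unfolding S_def .
qed

section \<open>Bases with respect to a pairing\<close>

text \<open>A family \<open>v\<close> in \<open>Y\<close> is compared through the values \<open>p x\<close> of the tests \<open>x \<in> X\<close>;
  this is how states are seen by effects and effects by states.\<close>

definition pairing_indep :: "'a set \<Rightarrow> ('a \<Rightarrow> 'b \<Rightarrow> 'k :: field) \<Rightarrow> nat \<Rightarrow> (nat \<Rightarrow> 'b) \<Rightarrow> bool" where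
  "pairing_indep X p m v \<longleftrightarrow> (\<forall>c. (\<forall>x\<in>X. (\<Sum>i<m. c i * p x (v i)) = 0) \<longrightarrow> (\<forall>i<m. c i = 0))"

definition pairing_spans :: "'a set \<Rightarrow> ('a \<Rightarrow> 'b \<Rightarrow> 'k :: field) \<Rightarrow> 'b set \<Rightarrow> nat \<Rightarrow> (nat \<Rightarrow> 'b) \<Rightarrow> bool" where
  "pairing_spans X p Y m v \<longleftrightarrow> (\<forall>y\<in>Y. \<exists>c. \<forall>x\<in>X. p x y = (\<Sum>i<m. c i * p x (v i)))"

definition pairing_basis :: "'a set \<Rightarrow> ('a \<Rightarrow> 'b \<Rightarrow> 'k :: field) \<Rightarrow> 'b set \<Rightarrow> nat \<Rightarrow> (nat \<Rightarrow> 'b) \<Rightarrow> bool" where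
  "pairing_basis X p Y m v \<longleftrightarrow> (\<forall>i<m. v i \<in> Y) \<and> pairing_indep X p m v \<and> pairing_spans X p Y m v"

definition pairing_nonsingular ::
    "'a set \<Rightarrow> ('a \<Rightarrow> 'b \<Rightarrow> 'k :: field) \<Rightarrow> 'b set \<Rightarrow> nat \<Rightarrow> (nat \<Rightarrow> 'a) \<Rightarrow> (nat \<Rightarrow> 'b) \<Rightarrow> bool" where
  "pairing_nonsingular X p Y m u v \<longleftrightarrow>
     (\<forall>j<m. u j \<in> X) \<and> (\<forall>i<m. v i \<in> Y) \<and> det (mat m m (\<lambda>(j, i). p (u j) (v i))) \<noteq> 0"

lemma pairing_nonsingular_swap:
  "pairing_nonsingular X p Y m u v \<longleftrightarrow> pairing_nonsingular Y (\<lambda>y x. p x y) X m v u"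
  unfolding pairing_nonsingular_def using det_mat_swap_indices[of m "\<lambda>j i. p (u j) (v i)"] by auto

lemma pairing_nonsingular_imp_indep:
  assumes "pairing_nonsingular X p Y m u v"
  shows "pairing_indep X p m v"
  unfolding pairing_indep_def
proof (rule allI, rule impI)
  fix c assume "\<forall>x\<in>X. (\<Sum>i<m. c i * p x (v i)) = 0"
  then have "\<forall>j<m. (\<Sum>i<m. p (u j) (v i) * c i) = 0"
    using assms unfolding pairing_nonsingular_def by (simp add: mult.commute)
  then show "\<forall>i<m. c i = 0"
    using assms unfolding pairing_nonsingular_def det_mat_nonzero_iff_kernel by blast
qed

lemma pairing_nonsingular_maximal_imp_spans:
  assumes nonsingular: "pairing_nonsingular X p Y m u v"
    and maximal: "\<And>u' v'. \<not> pairing_nonsingular X p Y (Suc m) u' v'"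
  shows "pairing_spans X p Y m v"
  unfolding pairing_spans_def
proof
  fix y assume "y \<in> Y"
  have "det (mat m m (\<lambda>(j, i). p (u j) (v i))) \<noteq> 0"
    using nonsingular unfolding pairing_nonsingular_def by blast
  then obtain c where c: "\<forall>j<m. (\<Sum>i<m. p (u j) (v i) * c i) = p (u j) y"
    using det_mat_nonzero_imp_solvable[of m "\<lambda>j i. p (u j) (v i)" "\<lambda>j. p (u j) y"] by blast
  show "\<exists>c. \<forall>x\<in>X. p x y = (\<Sum>i<m. c i * p x (v i))"
  proof (intro exI ballI, rule ccontr)
    fix x assume "x \<in> X" and "p x y \<noteq> (\<Sum>i<m. c i * p x (v i))"
    define u' where "u' = u(m := x)"
    define v' where "v' = v(m := y)"
    have "det (mat (Suc m) (Suc m) (\<lambda>(j, i). p (u' j) (v' i))) \<noteq> 0"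
    proof (rule det_mat_bordered_nonzero[where x = c])
      have "mat m m (\<lambda>(j, i). p (u' j) (v' i)) = mat m m (\<lambda>(j, i). p (u j) (v i))"
        by (rule eq_matI) (auto simp: u'_def v'_def)
      then show "det (mat m m (\<lambda>(j, i). p (u' j) (v' i))) \<noteq> 0"
        using nonsingular unfolding pairing_nonsingular_def by simp
      show "\<forall>j<m. (\<Sum>i<m. p (u' j) (v' i) * c i) = p (u' j) (v' m)"
        using c by (simp add: u'_def v'_def)
      show "p (u' m) (v' m) \<noteq> (\<Sum>i<m. p (u' m) (v' i) * c i)"
        using \<open>p x y \<noteq> _\<close> by (simp add: u'_def v'_def mult.commute)
    qed
    then have "pairing_nonsingular X p Y (Suc m) u' v'"
      using nonsingular \<open>x \<in> X\<close> \<open>y \<in> Y\<close>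
      unfolding pairing_nonsingular_def u'_def v'_def by (auto simp: less_Suc_eq)
    then show False
      using maximal by blast
  qed
qed

lemma pairing_nonsingular_bounded:
  assumes "finite F"
    and determines: "\<And>(m::nat) c v. \<forall>i<m. v i \<in> Y \<Longrightarrow> \<forall>x\<in>F. (\<Sum>i<m. c i * p x (v i)) = 0 \<Longrightarrow>
                       \<forall>x\<in>X. (\<Sum>i<m. c i * p x (v i)) = 0"
  shows "\<exists>n. \<forall>m u v. pairing_nonsingular X p Y m u v \<longrightarrow> m \<le> n"
proof -
  obtain xs where xs: "set xs = F"
    using finite_list[OF \<open>finite F\<close>] by blast
  have bound: "m \<le> length xs" if nonsingular: "pairing_nonsingular X p Y m u v" for m u v
  proof (rule ccontr)
    assume "\<not> m \<le> length xs"
    define g where "g j i = (if j < length xs then p (xs ! j) (v i) else 0)" for j i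
    have "det (mat m m (\<lambda>(j, i). g j i)) = 0"
      using \<open>\<not> m \<le> length xs\<close> by (intro det_mat_zero_row[of "length xs"]) (auto simp: g_def)
    then obtain c where c: "\<forall>j<m. (\<Sum>i<m. g j i * c i) = 0" and "\<exists>i<m. c i \<noteq> 0"
      using det_mat_nonzero_iff_kernel[of m g] by auto
    have "\<forall>x\<in>F. (\<Sum>i<m. c i * p x (v i)) = 0"
    proof
      fix x assume "x \<in> F"
      then obtain j where "j < length xs" and "x = xs ! j"
        using xs in_set_conv_nth by metis
      have "j < m"
        using \<open>j < length xs\<close> \<open>\<not> m \<le> length xs\<close> by simp
      then show "(\<Sum>i<m. c i * p x (v i)) = 0"
        using c[rule_format, OF \<open>j < m\<close>] \<open>j < length xs\<close> \<open>x = xs ! j\<close>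
        by (simp add: g_def mult.commute)
    qed
    moreover have "\<forall>i<m. v i \<in> Y"
      using nonsingular unfolding pairing_nonsingular_def by blast
    ultimately have "\<forall>x\<in>X. (\<Sum>i<m. c i * p x (v i)) = 0"
      using determines by blast
    then show False
      using pairing_nonsingular_imp_indep[OF nonsingular] \<open>\<exists>i<m. c i \<noteq> 0\<close>
      unfolding pairing_indep_def by blast
  qed
  show ?thesis
    by (intro exI[of _ "length xs"] allI impI bound)
qed

lemma pairing_nonsingular_maximal_imp_bases:
  assumes nonsingular: "pairing_nonsingular X p Y m u v"
    and maximal: "\<And>u' v'. \<not> pairing_nonsingular X p Y (Suc m) u' v'"
  shows "pairing_basis X p Y m v" and "pairing_basis Y (\<lambda>y x. p x y) X m u"
proof -
  have swapped: "pairing_nonsingular Y (\<lambda>y x. p x y) X m v u"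
    using pairing_nonsingular_swap[THEN iffD1, OF nonsingular] .
  have swapped_maximal: "\<not> pairing_nonsingular Y (\<lambda>y x. p x y) X (Suc m) v' u'" for u' v'
    using maximal[of u' v'] unfolding pairing_nonsingular_swap[of X p Y _ u' v'] .
  show "pairing_basis X p Y m v"
    unfolding pairing_basis_def
  proof (intro conjI)
    show "\<forall>i<m. v i \<in> Y"
      using nonsingular unfolding pairing_nonsingular_def by blast
    show "pairing_indep X p m v"
      by (rule pairing_nonsingular_imp_indep[OF nonsingular])
    show "pairing_spans X p Y m v"
      by (rule pairing_nonsingular_maximal_imp_spans[OF nonsingular maximal])
  qed
  show "pairing_basis Y (\<lambda>y x. p x y) X m u"
    unfolding pairing_basis_def
  proof (intro conjI)
    show "\<forall>i<m. u i \<in> X"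
      using nonsingular unfolding pairing_nonsingular_def by blast
    show "pairing_indep Y (\<lambda>y x. p x y) m u"
      by (rule pairing_nonsingular_imp_indep[OF swapped])
    show "pairing_spans Y (\<lambda>y x. p x y) X m u"
      by (rule pairing_nonsingular_maximal_imp_spans[OF swapped swapped_maximal])
  qed
qed

lemma pairing_bases_exist:
  assumes "finite F"
    and determines: "\<And>(m::nat) c v. \<forall>i<m. v i \<in> Y \<Longrightarrow> \<forall>x\<in>F. (\<Sum>i<m. c i * p x (v i)) = 0 \<Longrightarrow>
                       \<forall>x\<in>X. (\<Sum>i<m. c i * p x (v i)) = 0"
  shows "\<exists>m u v. pairing_basis X p Y m v \<and> pairing_basis Y (\<lambda>y x. p x y) X m u"
proof -
  let ?S = "{m. \<exists>u v. pairing_nonsingular X p Y m u v}"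
  obtain n where "\<forall>m u v. pairing_nonsingular X p Y m u v \<longrightarrow> m \<le> n"
    using pairing_nonsingular_bounded[where F = F and X = X and Y = Y and p = p, OF assms] by blast
  then have "?S \<subseteq> {..n}"
    by auto
  then have "finite ?S"
    by (rule finite_subset) simp
  moreover have "0 \<in> ?S"
    unfolding pairing_nonsingular_def det_mat_nonzero_iff_kernel by simp
  ultimately have "Max ?S \<in> ?S"
    using Max_in by blast
  then obtain u v where nonsingular: "pairing_nonsingular X p Y (Max ?S) u v"
    by blast
  have maximal: "\<not> pairing_nonsingular X p Y (Suc (Max ?S)) u' v'" for u' v'
  proof
    assume "pairing_nonsingular X p Y (Suc (Max ?S)) u' v'"
    then have "Suc (Max ?S) \<in> ?S"
      by blast
    then have "Suc (Max ?S) \<le> Max ?S"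
      by (rule Max_ge[OF \<open>finite ?S\<close>])
    then show False
      by simp
  qed
  show ?thesis
    using pairing_nonsingular_maximal_imp_bases[OF nonsingular maximal]
    by (intro exI[of _ "Max ?S"] exI[of _ u] exI[of _ v] conjI)
qed

lemma pairing_bases_det_nonzero:
  assumes v: "pairing_basis X p Y m v" and u: "pairing_basis Y (\<lambda>y x. p x y) X m u"
  shows "det (mat m m (\<lambda>(j, i). p (u j) (v i))) \<noteq> 0"
  unfolding det_mat_nonzero_iff_kernel
proof (rule allI, rule impI)
  fix c assume kernel: "\<forall>j<m. (\<Sum>i<m. p (u j) (v i) * c i) = 0"
  have "(\<Sum>i<m. c i * p x (v i)) = 0" if "x \<in> X" for x
  proof -
    obtain a where a: "\<forall>y\<in>Y. p x y = (\<Sum>j<m. a j * p (u j) y)"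
      using u \<open>x \<in> X\<close> unfolding pairing_basis_def pairing_spans_def by blast
    have "(\<Sum>i<m. c i * p x (v i)) = (\<Sum>i<m. \<Sum>j<m. a j * (p (u j) (v i) * c i))"
      using a v unfolding pairing_basis_def by (auto simp: sum_distrib_left sum_distrib_right mult_ac intro: sum.cong)
    also have "\<dots> = (\<Sum>j<m. a j * (\<Sum>i<m. p (u j) (v i) * c i))"
      by (subst sum.swap) (simp add: sum_distrib_left)
    also have "\<dots> = 0"
      using kernel by simp
    finally show ?thesis .
  qed
  then show "\<forall>i<m. c i = 0"
    using v unfolding pairing_basis_def pairing_indep_def by blast
qed

lemma lc_val_Nil [simp]: "lc_val f [] = 0"
  by (simp add: lc_val_def)

lemma lc_val_Cons [simp]: "lc_val f ((c, T) # L) = c * f T + lc_val f L"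
  by (simp add: lc_val_def)

lemma lc_val_upt: "lc_val f (map (\<lambda>i. (c i, T i)) [0..<m]) = (\<Sum>i<m. c i * f (T i))"
  by (induction m) (simp_all add: lc_val_def)

lemma lc_val_cong: "(\<And>c T. (c, T) \<in> set L \<Longrightarrow> f T = g T) \<Longrightarrow> lc_val f L = lc_val g L"
  unfolding lc_val_def by (intro arg_cong[where f = sum_list] map_cong refl) auto

lemma lc_val_sum_list:
  assumes "\<And>c T. (c, T) \<in> set L \<Longrightarrow> f T = (\<Sum>x\<leftarrow>xs. a x * g x T)"
  shows "lc_val f L = (\<Sum>x\<leftarrow>xs. a x * lc_val (g x) L)"
  using assms
proof (induction L)
  case Nil
  then show ?case by simp
next
  case (Cons cT L)
  obtain c T where cT: "cT = (c, T)"
    by (cases cT)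
  have "f T = (\<Sum>x\<leftarrow>xs. a x * g x T)"
    using Cons.prems cT by force
  moreover have "lc_val f L = (\<Sum>x\<leftarrow>xs. a x * lc_val (g x) L)"
    by (rule Cons.IH) (auto intro: Cons.prems)
  ultimately show ?case
    using cT by (simp add: sum_list_addf algebra_simps flip: sum_list_const_mult)
qed

lemma lc_val_eq_if_combination:
  assumes "\<And>c T. (c, T) \<in> set L \<union> set L' \<Longrightarrow> f T = (\<Sum>x\<leftarrow>xs. \<Sum>y\<leftarrow>ys. a x y * g x y T)"
    and "\<And>x y. x \<in> set xs \<Longrightarrow> y \<in> set ys \<Longrightarrow> lc_val (g x y) L = lc_val (g x y) L'"
  shows "lc_val f L = lc_val f L'"
proof -
  have "lc_val f K = (\<Sum>x\<leftarrow>xs. \<Sum>y\<leftarrow>ys. a x y * lc_val (g x y) K)"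
    if "K = L \<or> K = L'" for K
  proof -
    have "lc_val f K = (\<Sum>x\<leftarrow>xs. 1 * lc_val (\<lambda>T. \<Sum>y\<leftarrow>ys. a x y * g x y T) K)"
      using assms(1) that by (intro lc_val_sum_list) auto
    also have "\<dots> = (\<Sum>x\<leftarrow>xs. \<Sum>y\<leftarrow>ys. a x y * lc_val (g x y) K)"
      by (simp add: lc_val_sum_list)
    finally show ?thesis .
  qed
  then show ?thesis
    using assms(2) by (simp cong: map_cong)
qed

lemma lc_val_map_triples:
  "lc_val f (map (\<lambda>(c, P, E). (c, g P E)) D) = (\<Sum>(c, P, E)\<leftarrow>D. c * f (g P E))"
  by (induction D) (auto simp: lc_val_def)

lemma sum_list_map_triples_cong:
  "(\<And>c P E. (c, P, E) \<in> set D \<Longrightarrow> f c P E = g c P E) \<Longrightarrow>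
   (\<Sum>(c, P, E)\<leftarrow>D. f c P E) = (\<Sum>(c, P, E)\<leftarrow>D. g c P E)"
  by (induction D) auto

lemma tensL_Cons [simp]: "tensL Th (A # As) = tensS Th A (tensL Th As)"
  and parL_Cons [simp]: "parL Th (P # Ps) = parc Th P (parL Th Ps)"
  by (simp_all add: tensL_def parL_def)

locale operational =
  fixes Th :: "('s, 'p) optheory"
  assumes operational: "operational_theory Th"
begin

abbreviation states :: "'s \<Rightarrow> 'p set" where
  "states A \<equiv> hom Th (unitS Th) A"

abbreviation effects :: "'s \<Rightarrow> 'p set" where
  "effects A \<equiv> hom Th A (unitS Th)"

lemma process_theory: "process_theory Th"
  using operational unfolding operational_theory_def by blast

lemma hom_iff [simp]: "T \<in> hom Th A B \<longleftrightarrow> optheory.dom Th T = A \<and> cod Th T = B"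
  unfolding hom_def by simp

lemma dom_seqc [simp]: "cod Th f = optheory.dom Th g \<Longrightarrow> optheory.dom Th (seqc Th g f) = optheory.dom Th f"
  and cod_seqc [simp]: "cod Th f = optheory.dom Th g \<Longrightarrow> cod Th (seqc Th g f) = cod Th g"
  and dom_parc [simp]: "optheory.dom Th (parc Th f g) = tensS Th (optheory.dom Th f) (optheory.dom Th g)"
  and cod_parc [simp]: "cod Th (parc Th f g) = tensS Th (cod Th f) (cod Th g)"
  and dom_idp [simp]: "optheory.dom Th (idp Th A) = A"
  and cod_idp [simp]: "cod Th (idp Th A) = A"
  using process_theory unfolding process_theory_def by simp_all

lemma seqc_assoc:
  "cod Th f = optheory.dom Th g \<Longrightarrow> cod Th g = optheory.dom Th h \<Longrightarrow>
   seqc Th h (seqc Th g f) = seqc Th (seqc Th h g) f"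
  using process_theory unfolding process_theory_def by simp

lemma seqc_idp_left [simp]: "cod Th f = B \<Longrightarrow> seqc Th (idp Th B) f = f"
  and seqc_idp_right [simp]: "optheory.dom Th f = A \<Longrightarrow> seqc Th f (idp Th A) = f"
  using process_theory unfolding process_theory_def by blast+

lemma tensS_assoc: "tensS Th A (tensS Th B C) = tensS Th (tensS Th A B) C"
  and parc_assoc: "parc Th f (parc Th g h) = parc Th (parc Th f g) h"
  and idp_tensS: "idp Th (tensS Th A B) = parc Th (idp Th A) (idp Th B)"
  using process_theory unfolding process_theory_def by simp_all

lemma tensS_unit [simp]: "tensS Th (unitS Th) A = A" "tensS Th A (unitS Th) = A"
  and parc_idp_unit [simp]: "parc Th (idp Th (unitS Th)) f = f" "parc Th f (idp Th (unitS Th)) = f"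
  using process_theory unfolding process_theory_def by simp_all

lemma parc_seqc:
  "cod Th f = optheory.dom Th g \<Longrightarrow> cod Th f' = optheory.dom Th g' \<Longrightarrow>
   parc Th (seqc Th g f) (seqc Th g' f') = seqc Th (parc Th g g') (parc Th f f')"
  using process_theory unfolding process_theory_def by simp

lemma parc_slide_left:
  "parc Th f g = seqc Th (parc Th f (idp Th (cod Th g))) (parc Th (idp Th (optheory.dom Th f)) g)"
  using parc_seqc[of "idp Th (optheory.dom Th f)" f g "idp Th (cod Th g)"] by simp

lemma parc_slide_right:
  "parc Th f g = seqc Th (parc Th (idp Th (cod Th f)) g) (parc Th f (idp Th (optheory.dom Th g)))"
  using parc_seqc[of f "idp Th (cod Th f)" "idp Th (optheory.dom Th g)" g] by simp

lemma parc_seqc_idp: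
  "cod Th f = optheory.dom Th g \<Longrightarrow> parc Th (seqc Th g f) (idp Th W) = seqc Th (parc Th g (idp Th W)) (parc Th f (idp Th W))"
  using parc_seqc[of f g "idp Th W" "idp Th W"] by simp

lemma seqc_scalar_first:
  "z \<in> hom Th (unitS Th) (unitS Th) \<Longrightarrow> cod Th f = optheory.dom Th g \<Longrightarrow>
   seqc Th g (parc Th z f) = parc Th z (seqc Th g f)"
  using parc_seqc[of z "idp Th (unitS Th)" f g] by simp

lemma seqc_scalar_second:
  "z \<in> hom Th (unitS Th) (unitS Th) \<Longrightarrow> cod Th f = optheory.dom Th g \<Longrightarrow>
   seqc Th (parc Th z g) f = parc Th z (seqc Th g f)"
  using parc_seqc[of "idp Th (unitS Th)" z f g] by simp

lemma seqc_scalar_eq_parc: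
  "cod Th f = unitS Th \<Longrightarrow> optheory.dom Th z = unitS Th \<Longrightarrow> seqc Th z f = parc Th z f"
  using parc_slide_left[of z f] by simp

lemma prob_parc_scalars:
  "f \<in> hom Th (unitS Th) (unitS Th) \<Longrightarrow> g \<in> hom Th (unitS Th) (unitS Th) \<Longrightarrow>
   prob Th (parc Th f g) = prob Th f * prob Th g"
  using operational unfolding operational_theory_def by blast

lemma prob_seqc_scalars:
  "f \<in> hom Th (unitS Th) (unitS Th) \<Longrightarrow> g \<in> hom Th (unitS Th) (unitS Th) \<Longrightarrow>
   prob Th (seqc Th g f) = prob Th g * prob Th f"
  using prob_parc_scalars seqc_scalar_eq_parc by simp

lemma effect_tester:
  assumes "E \<in> effects A"
  shows "(idp Th (unitS Th), E, unitS Th) \<in> testers Th (unitS Th) A"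
    and "P \<in> states A \<Longrightarrow> tpr Th (idp Th (unitS Th), E, unitS Th) P = prob Th (seqc Th E P)"
  using assms by (auto simp: testers_def tpr_def)

lemma state_tester:
  assumes "P \<in> states A"
  shows "(P, idp Th (unitS Th), unitS Th) \<in> testers Th A (unitS Th)"
    and "E \<in> effects A \<Longrightarrow> tpr Th (P, idp Th (unitS Th), unitS Th) E = prob Th (seqc Th E P)"
  using assms by (auto simp: testers_def tpr_def)

lemma tester_of_states_is_effect:
  assumes "\<tau> \<in> testers Th (unitS Th) A"
  obtains E where "E \<in> effects A" and "\<And>P. P \<in> states A \<Longrightarrow> tpr Th \<tau> P = prob Th (seqc Th E P)"
proof -
  obtain s e W where \<tau>: "\<tau> = (s, e, W)" and s: "s \<in> hom Th (unitS Th) W"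
    and e: "e \<in> hom Th (tensS Th A W) (unitS Th)"
    using assms unfolding testers_def by auto
  show thesis
  proof (rule that)
    show "seqc Th e (parc Th (idp Th A) s) \<in> effects A"
      using s e by simp
    fix P assume P: "P \<in> states A"
    have "seqc Th (parc Th P (idp Th W)) s = parc Th P s"
      using parc_slide_left[of P s] s P by simp
    also have "\<dots> = seqc Th (parc Th (idp Th A) s) P"
      using parc_slide_right[of P s] s P by simp
    finally show "tpr Th \<tau> P = prob Th (seqc Th (seqc Th e (parc Th (idp Th A) s)) P)"
      unfolding \<tau> tpr_def using s e P by (simp add: seqc_assoc)
  qed
qed

lemma tester_of_effects_is_state:
  assumes "\<tau> \<in> testers Th A (unitS Th)"
  obtains P where "P \<in> states A" and "\<And>E. E \<in> effects A \<Longrightarrow> tpr Th \<tau> E = prob Th (seqc Th E P)"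
proof -
  obtain s e W where \<tau>: "\<tau> = (s, e, W)" and s: "s \<in> hom Th (unitS Th) (tensS Th A W)"
    and e: "e \<in> hom Th W (unitS Th)"
    using assms unfolding testers_def by auto
  show thesis
  proof (rule that)
    show "seqc Th (parc Th (idp Th A) e) s \<in> states A"
      using s e by simp
    fix E assume E: "E \<in> effects A"
    have "seqc Th e (parc Th E (idp Th W)) = parc Th E e"
      using parc_slide_right[of E e] e E by simp
    also have "\<dots> = seqc Th E (parc Th (idp Th A) e)"
      using parc_slide_left[of E e] e E by simp
    finally have "seqc Th e (parc Th E (idp Th W)) = seqc Th E (parc Th (idp Th A) e)" .
    then show "tpr Th \<tau> E = prob Th (seqc Th E (seqc Th (parc Th (idp Th A) e) s))"
      unfolding \<tau> tpr_def using s e E by (simp add: seqc_assoc)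
  qed
qed

lemma gpt_eq_states_iff:
  assumes ok: "lc_ok Th (unitS Th) A L" "lc_ok Th (unitS Th) A L'"
  shows "gpt_eq Th (unitS Th) A L L' \<longleftrightarrow>
    (\<forall>E\<in>effects A. lc_val (\<lambda>P. prob Th (seqc Th E P)) L = lc_val (\<lambda>P. prob Th (seqc Th E P)) L')"
proof
  assume eq: "gpt_eq Th (unitS Th) A L L'"
  show "\<forall>E\<in>effects A. lc_val (\<lambda>P. prob Th (seqc Th E P)) L = lc_val (\<lambda>P. prob Th (seqc Th E P)) L'"
  proof
    fix E assume E: "E \<in> effects A"
    have "lc_val (tpr Th (idp Th (unitS Th), E, unitS Th)) K = lc_val (\<lambda>P. prob Th (seqc Th E P)) K"
      if "lc_ok Th (unitS Th) A K" for K
      using that effect_tester(2)[OF E] unfolding lc_ok_def by (intro lc_val_cong) auto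
    then show "lc_val (\<lambda>P. prob Th (seqc Th E P)) L = lc_val (\<lambda>P. prob Th (seqc Th E P)) L'"
      using eq effect_tester(1)[OF E] ok unfolding gpt_eq_def by metis
  qed
next
  assume eq: "\<forall>E\<in>effects A. lc_val (\<lambda>P. prob Th (seqc Th E P)) L = lc_val (\<lambda>P. prob Th (seqc Th E P)) L'"
  show "gpt_eq Th (unitS Th) A L L'"
    unfolding gpt_eq_def
  proof
    fix \<tau> assume "\<tau> \<in> testers Th (unitS Th) A"
    then obtain E where E: "E \<in> effects A" and tpr_E: "\<And>P. P \<in> states A \<Longrightarrow> tpr Th \<tau> P = prob Th (seqc Th E P)"
      by (rule tester_of_states_is_effect) blast
    have "lc_val (tpr Th \<tau>) K = lc_val (\<lambda>P. prob Th (seqc Th E P)) K" if "lc_ok Th (unitS Th) A K" for K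
      using that tpr_E unfolding lc_ok_def by (intro lc_val_cong) auto
    then show "lc_val (tpr Th \<tau>) L = lc_val (tpr Th \<tau>) L'"
      using eq E ok by metis
  qed
qed

lemma gpt_eq_effects_iff:
  assumes ok: "lc_ok Th A (unitS Th) L" "lc_ok Th A (unitS Th) L'"
  shows "gpt_eq Th A (unitS Th) L L' \<longleftrightarrow>
    (\<forall>P\<in>states A. lc_val (\<lambda>E. prob Th (seqc Th E P)) L = lc_val (\<lambda>E. prob Th (seqc Th E P)) L')"
proof
  assume eq: "gpt_eq Th A (unitS Th) L L'"
  show "\<forall>P\<in>states A. lc_val (\<lambda>E. prob Th (seqc Th E P)) L = lc_val (\<lambda>E. prob Th (seqc Th E P)) L'"
  proof
    fix P assume P: "P \<in> states A"
    have "lc_val (tpr Th (P, idp Th (unitS Th), unitS Th)) K = lc_val (\<lambda>E. prob Th (seqc Th E P)) K"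
      if "lc_ok Th A (unitS Th) K" for K
      using that state_tester(2)[OF P] unfolding lc_ok_def by (intro lc_val_cong) auto
    then show "lc_val (\<lambda>E. prob Th (seqc Th E P)) L = lc_val (\<lambda>E. prob Th (seqc Th E P)) L'"
      using eq state_tester(1)[OF P] ok unfolding gpt_eq_def by metis
  qed
next
  assume eq: "\<forall>P\<in>states A. lc_val (\<lambda>E. prob Th (seqc Th E P)) L = lc_val (\<lambda>E. prob Th (seqc Th E P)) L'"
  show "gpt_eq Th A (unitS Th) L L'"
    unfolding gpt_eq_def
  proof
    fix \<tau> assume "\<tau> \<in> testers Th A (unitS Th)"
    then obtain P where P: "P \<in> states A" and tpr_P: "\<And>E. E \<in> effects A \<Longrightarrow> tpr Th \<tau> E = prob Th (seqc Th E P)"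
      by (rule tester_of_effects_is_state) blast
    have "lc_val (tpr Th \<tau>) K = lc_val (\<lambda>E. prob Th (seqc Th E P)) K" if "lc_ok Th A (unitS Th) K" for K
      using that tpr_P unfolding lc_ok_def by (intro lc_val_cong) auto
    then show "lc_val (tpr Th \<tau>) L = lc_val (tpr Th \<tau>) L'"
      using eq P ok by metis
  qed
qed

lemma lin_indep_spanning_states_iff:
  "lin_indep_spanning_states Th A m P \<longleftrightarrow>
   pairing_basis (effects A) (\<lambda>E P. prob Th (seqc Th E P)) (states A) m P"
proof (cases "\<forall>i<m. P i \<in> states A")
  case True
  then have "lc_ok Th (unitS Th) A (map (\<lambda>i. (c i, P i)) [0..<m])" for c
    by (auto simp: lc_ok_def)
  then show ?thesis
    using True
    unfolding lin_indep_spanning_states_def lin_indep_spanning_def pairing_basis_def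
      pairing_indep_def pairing_spans_def
    by (simp add: gpt_eq_states_iff lc_ok_def lc_val_upt)
qed (auto simp: lin_indep_spanning_states_def lin_indep_spanning_def pairing_basis_def)

lemma lin_indep_spanning_effects_iff:
  "lin_indep_spanning_effects Th A m E \<longleftrightarrow>
   pairing_basis (states A) (\<lambda>P E. prob Th (seqc Th E P)) (effects A) m E"
proof (cases "\<forall>i<m. E i \<in> effects A")
  case True
  then have "lc_ok Th A (unitS Th) (map (\<lambda>i. (c i, E i)) [0..<m])" for c
    by (auto simp: lc_ok_def)
  then show ?thesis
    using True
    unfolding lin_indep_spanning_effects_def lin_indep_spanning_def pairing_basis_def
      pairing_indep_def pairing_spans_def
    by (simp add: gpt_eq_effects_iff lc_ok_def lc_val_upt)
qed (auto simp: lin_indep_spanning_effects_def lin_indep_spanning_def pairing_basis_def)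

lemma finite_effects_determine_states:
  obtains F where "finite F"
    and "\<And>(m::nat) c P. \<forall>i<m. P i \<in> states A \<Longrightarrow> \<forall>E\<in>F. (\<Sum>i<m. c i * prob Th (seqc Th E (P i))) = 0 \<Longrightarrow>
           \<forall>E\<in>effects A. (\<Sum>i<m. c i * prob Th (seqc Th E (P i))) = 0"
proof -
  have "\<exists>F. finite F \<and> F \<subseteq> testers Th (unitS Th) A \<and>
      (\<forall>L. lc_ok Th (unitS Th) A L \<longrightarrow> (\<forall>\<tau>\<in>F. lc_val (tpr Th \<tau>) L = 0) \<longrightarrow>
           gpt_eq Th (unitS Th) A L [])"
    using operational unfolding operational_theory_def by blast
  then obtain Ft where "finite Ft" and Ft: "Ft \<subseteq> testers Th (unitS Th) A"
    and complete: "\<And>L. lc_ok Th (unitS Th) A L \<Longrightarrow> \<forall>\<tau>\<in>Ft. lc_val (tpr Th \<tau>) L = 0 \<Longrightarrow>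
                    gpt_eq Th (unitS Th) A L []"
    by blast
  have "\<forall>\<tau>\<in>Ft. \<exists>E. E \<in> effects A \<and> (\<forall>P\<in>states A. tpr Th \<tau> P = prob Th (seqc Th E P))"
    using Ft tester_of_states_is_effect by (metis subsetD)
  then obtain effect where effect: "\<And>\<tau> P. \<tau> \<in> Ft \<Longrightarrow> P \<in> states A \<Longrightarrow>
      tpr Th \<tau> P = prob Th (seqc Th (effect \<tau>) P)"
    by metis
  show thesis
  proof (rule that[of "effect ` Ft"])
    show "finite (effect ` Ft)"
      using \<open>finite Ft\<close> by simp
    fix m :: nat and c P
    assume P: "\<forall>i<m. P i \<in> states A"
      and zero: "\<forall>E\<in>effect ` Ft. (\<Sum>i<m. c i * prob Th (seqc Th E (P i))) = 0"
    let ?L = "map (\<lambda>i. (c i, P i)) [0..<m]"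
    have ok: "lc_ok Th (unitS Th) A ?L"
      using P by (auto simp: lc_ok_def)
    have "\<forall>\<tau>\<in>Ft. lc_val (tpr Th \<tau>) ?L = 0"
      using zero P effect by (simp add: lc_val_upt)
    then have "gpt_eq Th (unitS Th) A ?L []"
      by (rule complete[OF ok])
    then show "\<forall>E\<in>effects A. (\<Sum>i<m. c i * prob Th (seqc Th E (P i))) = 0"
      using ok by (simp add: gpt_eq_states_iff lc_ok_def lc_val_upt)
  qed
qed

lemma lin_indep_spanning_bases_exist:
  obtains m P E where "lin_indep_spanning_states Th A m P" and "lin_indep_spanning_effects Th A m E"
proof -
  obtain F where "finite F"
    and determines: "\<And>(m::nat) c P. \<forall>i<m. P i \<in> states A \<Longrightarrow> \<forall>E\<in>F. (\<Sum>i<m. c i * prob Th (seqc Th E (P i))) = 0 \<Longrightarrow>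
           \<forall>E\<in>effects A. (\<Sum>i<m. c i * prob Th (seqc Th E (P i))) = 0"
    by (rule finite_effects_determine_states[where A = A]) blast
  have "\<exists>m E P. pairing_basis (effects A) (\<lambda>E P. prob Th (seqc Th E P)) (states A) m P \<and>
      pairing_basis (states A) (\<lambda>P E. prob Th (seqc Th E P)) (effects A) m E"
    using \<open>finite F\<close> determines
    by (rule pairing_bases_exist[where F = F and X = "effects A" and Y = "states A"
        and p = "\<lambda>E P. prob Th (seqc Th E P)"])
  then show thesis
    using that unfolding lin_indep_spanning_states_iff lin_indep_spanning_effects_iff by blast
qed

lemma Nmat_carrier: "Nmat Th m P E \<in> carrier_mat m m"
  by (simp add: Nmat_def)

lemma det_Nmat_nonzero:
  assumes "lin_indep_spanning_states Th A m P" and "lin_indep_spanning_effects Th A m E"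
  shows "det (Nmat Th m P E) \<noteq> 0"
  using pairing_bases_det_nonzero[where X = "effects A" and Y = "states A"
      and p = "\<lambda>E P. prob Th (seqc Th E P)" and v = P and u = E] assms
  unfolding lin_indep_spanning_states_iff lin_indep_spanning_effects_iff Nmat_def by blast

lemma lc_val_id_expansion:
  "lc_val f (id_expansion Th m M P E) = (\<Sum>j<m. \<Sum>i<m. M $$ (j, i) * f (seqc Th (P j) (E i)))"
proof -
  have "lc_val f (concat Ls) = (\<Sum>L\<leftarrow>Ls. lc_val f L)" for Ls
    by (induction Ls) (auto simp: lc_val_def)
  moreover have "(\<Sum>j\<leftarrow>[0..<m]. g j) = (\<Sum>j<m. g j)" for g :: "nat \<Rightarrow> real"
    by (induction m) auto
  ultimately show ?thesis
    unfolding id_expansion_def by (simp add: lc_val_upt o_def)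
qed

lemma index_Nmat_mult:
  assumes "M \<in> carrier_mat m m" and "l < m" and "i < m"
  shows "(Nmat Th m P E * M) $$ (l, i) = (\<Sum>j<m. prob Th (seqc Th (E l) (P j)) * M $$ (j, i))"
  using assms unfolding Nmat_def by (simp add: scalar_prod_def atLeast0LessThan)

lemma id_expansion_on_product:
  assumes P: "lin_indep_spanning_states Th A m P" and E: "lin_indep_spanning_effects Th A m E"
    and right_inverse: "Nmat Th m P E * M = 1\<^sub>m m" and M: "M \<in> carrier_mat m m"
    and Q: "Q \<in> states A" and F: "F \<in> effects A"
  shows "lc_val (\<lambda>T. prob Th (seqc Th F (seqc Th T Q))) (id_expansion Th m M P E) = prob Th (seqc Th F Q)"
proof -
  define N where "N l j = prob Th (seqc Th (E l) (P j))" for l j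
  have P_states: "\<forall>j<m. P j \<in> states A"
    and "\<forall>Q\<in>states A. \<exists>b. \<forall>F\<in>effects A. prob Th (seqc Th F Q) = (\<Sum>k<m. b k * prob Th (seqc Th F (P k)))"
    using P unfolding lin_indep_spanning_states_iff pairing_basis_def pairing_spans_def by blast+
  then obtain b where b: "\<forall>F\<in>effects A. prob Th (seqc Th F Q) = (\<Sum>k<m. b k * prob Th (seqc Th F (P k)))"
    using Q by blast
  have E_effects: "\<forall>i<m. E i \<in> effects A"
    and "\<forall>F\<in>effects A. \<exists>a. \<forall>Q\<in>states A. prob Th (seqc Th F Q) = (\<Sum>l<m. a l * prob Th (seqc Th (E l) Q))"
    using E unfolding lin_indep_spanning_effects_iff pairing_basis_def pairing_spans_def by blast+
  then obtain a where a: "\<forall>Q\<in>states A. prob Th (seqc Th F Q) = (\<Sum>l<m. a l * prob Th (seqc Th (E l) Q))"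
    using F by blast
  have NM: "(\<Sum>j<m. N l j * M $$ (j, i)) = (if l = i then 1 else 0)" if "l < m" "i < m" for l i
    using index_Nmat_mult[where P = P and E = E, OF M that] right_inverse that unfolding N_def by simp
  have "prob Th (seqc Th F (seqc Th (seqc Th (P j) (E i)) Q)) =
      (\<Sum>l<m. a l * N l j) * (\<Sum>k<m. N i k * b k)" if "j < m" "i < m" for j i
  proof -
    have "seqc Th F (seqc Th (seqc Th (P j) (E i)) Q) = seqc Th (seqc Th F (P j)) (seqc Th (E i) Q)"
      using that P_states E_effects F Q by (simp add: seqc_assoc)
    then show ?thesis
      using that P_states E_effects F Q a b prob_seqc_scalars by (simp add: N_def mult.commute)
  qed
  then have "lc_val (\<lambda>T. prob Th (seqc Th F (seqc Th T Q))) (id_expansion Th m M P E) =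
      (\<Sum>j<m. \<Sum>i<m. M $$ (j, i) * (\<Sum>l<m. a l * N l j) * (\<Sum>k<m. N i k * b k))"
    unfolding lc_val_id_expansion by (simp add: mult.assoc)
  also have "\<dots> = (\<Sum>l<m. a l * (\<Sum>k<m. N l k * b k))"
    by (rule bilinear_form_right_inverse[of m N "\<lambda>j i. M $$ (j, i)"]) (use NM in simp)
  also have "\<dots> = prob Th (seqc Th F Q)"
    using a b P_states E_effects Q by (simp add: N_def mult.commute)
  finally show ?thesis .
qed

lemma id_expansion_if_tomographically_local:
  assumes TL: "tomographically_local Th"
    and P: "lin_indep_spanning_states Th A m P" and E: "lin_indep_spanning_effects Th A m E"
    and right_inverse: "Nmat Th m P E * M = 1\<^sub>m m" and M: "M \<in> carrier_mat m m"
  shows "gpt_eq Th A A [(1, idp Th A)] (id_expansion Th m M P E)"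
proof -
  have P_states: "\<forall>j<m. P j \<in> states A" and E_effects: "\<forall>i<m. E i \<in> effects A"
    using P E unfolding lin_indep_spanning_states_iff lin_indep_spanning_effects_iff pairing_basis_def
    by blast+
  have "gpt_eq Th (tensL Th [A]) (tensL Th [A]) [(1, idp Th A)] (id_expansion Th m M P E)"
  proof (intro TL[unfolded tomographically_local_def, rule_format], goal_cases)
    case 1
    show ?case
      by (simp add: lc_ok_def tensL_def)
  next
    case 2
    show ?case
      using P_states E_effects by (auto simp: lc_ok_def tensL_def id_expansion_def)
  next
    case (3 Qs Fs)
    then obtain Q F where "Qs = [Q]" "Fs = [F]" "Q \<in> states A" "F \<in> effects A"
      by (auto simp: length_Suc_conv)
    then show ?case
      using id_expansion_on_product[OF P E right_inverse M] by (simp add: parL_def)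
  qed
  then show ?thesis
    by (simp add: tensL_def)
qed

subsection \<open>Decompositions of the identity\<close>

definition id_decomp :: "'s \<Rightarrow> (real \<times> 'p \<times> 'p) list \<Rightarrow> bool" where
  "id_decomp A D \<longleftrightarrow> (\<forall>(c, P, E) \<in> set D. P \<in> states A \<and> E \<in> effects A) \<and>
     gpt_eq Th A A [(1, idp Th A)] (map (\<lambda>(c, P, E). (c, seqc Th P E)) D)"

lemma id_decomp_homs:
  assumes "id_decomp A D" and "(c, P, E) \<in> set D"
  shows "P \<in> states A" and "E \<in> effects A"
  using assms unfolding id_decomp_def by auto

lemma id_decomp_if_id_expansion:
  assumes "\<forall>j<m. P j \<in> states A" and "\<forall>i<m. E i \<in> effects A"
    and "gpt_eq Th A A [(1, idp Th A)] (id_expansion Th m M P E)"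
  shows "id_decomp A (concat (map (\<lambda>j. map (\<lambda>i. (M $$ (j, i), P j, E i)) [0..<m]) [0..<m]))"
  using assms unfolding id_decomp_def id_expansion_def by (auto simp: map_concat o_def)

lemma tpr_idp_id_decomp:
  assumes "id_decomp A D" and "\<tau> \<in> testers Th A A"
  shows "tpr Th \<tau> (idp Th A) = (\<Sum>(c, P, E)\<leftarrow>D. c * tpr Th \<tau> (seqc Th P E))"
  using assms unfolding id_decomp_def gpt_eq_def by (simp add: lc_val_map_triples)

lemma tpr_seqc_state_side:
  assumes "T \<in> hom Th A B" and "S \<in> hom Th B C" and "s \<in> hom Th (unitS Th) (tensS Th A W)"
  shows "tpr Th (s, e, W) (seqc Th S T) = tpr Th (seqc Th (parc Th T (idp Th W)) s, e, W) S"
  using assms by (simp add: tpr_def parc_seqc_idp seqc_assoc)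

lemma tpr_seqc_effect_side:
  assumes "T \<in> hom Th A B" and "S \<in> hom Th B C" and "s \<in> hom Th (unitS Th) (tensS Th A W)"
    and "e \<in> hom Th (tensS Th C W) (unitS Th)"
  shows "tpr Th (s, e, W) (seqc Th S T) = tpr Th (s, seqc Th e (parc Th S (idp Th W)), W) T"
  using assms by (simp add: tpr_def parc_seqc_idp seqc_assoc)

lemma tpr_seqc_scalar:
  assumes "z \<in> hom Th (unitS Th) (unitS Th)" and "P \<in> states B" and "E \<in> effects A"
    and "s \<in> hom Th (unitS Th) (tensS Th A W)" and "e \<in> hom Th (tensS Th B W) (unitS Th)"
  shows "tpr Th (s, e, W) (seqc Th P (seqc Th z E)) = prob Th z * tpr Th (s, e, W) (seqc Th P E)"
proof -
  have "seqc Th z E = parc Th z E"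
    using assms by (intro seqc_scalar_eq_parc) auto
  then have "seqc Th P (seqc Th z E) = parc Th z (seqc Th P E)"
    using seqc_scalar_first[of z E P] assms by simp
  then have "parc Th (seqc Th P (seqc Th z E)) (idp Th W) = parc Th z (parc Th (seqc Th P E) (idp Th W))"
    by (simp add: parc_assoc)
  then have "seqc Th e (seqc Th (parc Th (seqc Th P (seqc Th z E)) (idp Th W)) s) =
      parc Th z (seqc Th e (seqc Th (parc Th (seqc Th P E) (idp Th W)) s))"
    using assms seqc_scalar_second[of z s "parc Th (seqc Th P E) (idp Th W)"]
      seqc_scalar_first[of z "seqc Th (parc Th (seqc Th P E) (idp Th W)) s" e] by simp
  then show ?thesis
    using assms by (simp add: tpr_def prob_parc_scalars)
qed

lemma tpr_insert_id_decomp_output: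
  assumes D: "id_decomp B D" and T: "T \<in> hom Th A B" and "(s, e, W) \<in> testers Th A B"
  shows "tpr Th (s, e, W) T = (\<Sum>(c, P, E)\<leftarrow>D. c * tpr Th (s, e, W) (seqc Th (seqc Th P E) T))"
proof -
  have s: "s \<in> hom Th (unitS Th) (tensS Th A W)" and e: "e \<in> hom Th (tensS Th B W) (unitS Th)"
    using assms(3) unfolding testers_def by auto
  let ?\<tau> = "(seqc Th (parc Th T (idp Th W)) s, e, W)"
  have shift: "tpr Th ?\<tau> R = tpr Th (s, e, W) (seqc Th R T)" if "R \<in> hom Th B B" for R
    using tpr_seqc_state_side[OF T that s] by simp
  have "?\<tau> \<in> testers Th B B"
    using T s e unfolding testers_def by simp
  then have "tpr Th ?\<tau> (idp Th B) = (\<Sum>(c, P, E)\<leftarrow>D. c * tpr Th ?\<tau> (seqc Th P E))"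
    by (rule tpr_idp_id_decomp[OF D])
  also have "\<dots> = (\<Sum>(c, P, E)\<leftarrow>D. c * tpr Th (s, e, W) (seqc Th (seqc Th P E) T))"
    using id_decomp_homs[OF D] shift by (intro sum_list_map_triples_cong) auto
  finally show ?thesis
    using shift[of "idp Th B"] T by simp
qed

lemma tpr_insert_id_decomp_input:
  assumes D: "id_decomp A D" and R: "R \<in> hom Th A B" and "(s, e, W) \<in> testers Th A B"
  shows "tpr Th (s, e, W) R = (\<Sum>(c, P, E)\<leftarrow>D. c * tpr Th (s, e, W) (seqc Th R (seqc Th P E)))"
proof -
  have s: "s \<in> hom Th (unitS Th) (tensS Th A W)" and e: "e \<in> hom Th (tensS Th B W) (unitS Th)"
    using assms(3) unfolding testers_def by auto
  let ?\<tau> = "(s, seqc Th e (parc Th R (idp Th W)), W)"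
  have shift: "tpr Th ?\<tau> S = tpr Th (s, e, W) (seqc Th R S)" if "S \<in> hom Th A A" for S
    using tpr_seqc_effect_side[OF that R s e] by simp
  have "?\<tau> \<in> testers Th A A"
    using R s e unfolding testers_def by simp
  then have "tpr Th ?\<tau> (idp Th A) = (\<Sum>(c, P, E)\<leftarrow>D. c * tpr Th ?\<tau> (seqc Th P E))"
    by (rule tpr_idp_id_decomp[OF D])
  also have "\<dots> = (\<Sum>(c, P, E)\<leftarrow>D. c * tpr Th (s, e, W) (seqc Th R (seqc Th P E)))"
    using id_decomp_homs[OF D] shift by (intro sum_list_map_triples_cong) auto
  finally show ?thesis
    using shift[of "idp Th A"] R by simp
qed

lemma tpr_rank_one_seqc:
  assumes DA: "id_decomp A DA" and T: "T \<in> hom Th A B" and \<tau>: "(s, e, W) \<in> testers Th A B"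
    and P: "P \<in> states B" and E: "E \<in> effects B"
  shows "tpr Th (s, e, W) (seqc Th (seqc Th P E) T) = (\<Sum>(c', P', E')\<leftarrow>DA.
      c' * tpr Th (s, e, W) (seqc Th P E') * prob Th (seqc Th E (seqc Th T P')))"
proof -
  have s: "s \<in> hom Th (unitS Th) (tensS Th A W)" and e: "e \<in> hom Th (tensS Th B W) (unitS Th)"
    using \<tau> unfolding testers_def by auto
  have "tpr Th (s, e, W) (seqc Th (seqc Th P E) T) =
      (\<Sum>(c', P', E')\<leftarrow>DA. c' * tpr Th (s, e, W) (seqc Th (seqc Th (seqc Th P E) T) (seqc Th P' E')))"
    using tpr_insert_id_decomp_input[OF DA _ \<tau>] P E T by simp
  also have "\<dots> = (\<Sum>(c', P', E')\<leftarrow>DA.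
      c' * tpr Th (s, e, W) (seqc Th P E') * prob Th (seqc Th E (seqc Th T P')))"
  proof (rule sum_list_map_triples_cong)
    fix c' P' E' assume "(c', P', E') \<in> set DA"
    then have P': "P' \<in> states A" and E': "E' \<in> effects A"
      using id_decomp_homs[OF DA] by auto
    have "seqc Th (seqc Th (seqc Th P E) T) (seqc Th P' E') = seqc Th P (seqc Th (seqc Th E (seqc Th T P')) E')"
      using P E T P' E' by (simp add: seqc_assoc)
    then show "c' * tpr Th (s, e, W) (seqc Th (seqc Th (seqc Th P E) T) (seqc Th P' E')) =
        c' * tpr Th (s, e, W) (seqc Th P E') * prob Th (seqc Th E (seqc Th T P'))"
      using tpr_seqc_scalar[of "seqc Th E (seqc Th T P')" P B E' A s W e] P E T P' E' s e by simp
  qed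
  finally show ?thesis .
qed

text \<open>Inserting identity decompositions on both sides writes \<open>T\<close> as
  \<open>\<Sum> c c' (E \<circ> T \<circ> P') P \<circ> E'\<close>, a combination of rank-one processes whose coefficients
  \<open>E \<circ> T \<circ> P'\<close> are closed diagrams.\<close>

lemma tpr_expansion:
  assumes DA: "id_decomp A DA" and DB: "id_decomp B DB" and T: "T \<in> hom Th A B"
    and \<tau>: "\<tau> \<in> testers Th A B"
  shows "tpr Th \<tau> T = (\<Sum>(c, P, E)\<leftarrow>DB. \<Sum>(c', P', E')\<leftarrow>DA.
           c * c' * tpr Th \<tau> (seqc Th P E') * prob Th (seqc Th E (seqc Th T P')))"
proof -
  obtain s e W where \<tau>_def: "\<tau> = (s, e, W)"
    by (metis prod_cases3)
  have "tpr Th \<tau> T = (\<Sum>(c, P, E)\<leftarrow>DB. c * tpr Th \<tau> (seqc Th (seqc Th P E) T))"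
    using tpr_insert_id_decomp_output[OF DB T \<tau>[unfolded \<tau>_def]] unfolding \<tau>_def .
  also have "\<dots> = (\<Sum>(c, P, E)\<leftarrow>DB. \<Sum>(c', P', E')\<leftarrow>DA.
      c * c' * tpr Th \<tau> (seqc Th P E') * prob Th (seqc Th E (seqc Th T P')))"
  proof (rule sum_list_map_triples_cong)
    fix c P E assume "(c, P, E) \<in> set DB"
    then have "P \<in> states B" "E \<in> effects B"
      using id_decomp_homs[OF DB] by auto
    then show "c * tpr Th \<tau> (seqc Th (seqc Th P E) T) = (\<Sum>(c', P', E')\<leftarrow>DA.
        c * c' * tpr Th \<tau> (seqc Th P E') * prob Th (seqc Th E (seqc Th T P')))"
      using tpr_rank_one_seqc[OF DA T \<tau>[unfolded \<tau>_def]] unfolding \<tau>_def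
      by (simp add: mult.assoc prod.case_distrib flip: sum_list_const_mult)
  qed
  finally show ?thesis .
qed

lemma tpr_parc_idp: "tpr Th (s, e, tensS Th B W) X = tpr Th (s, e, W) (parc Th X (idp Th B))"
  by (simp add: tpr_def parc_assoc[symmetric] idp_tensS[symmetric])

lemma tpr_parc_rank_one:
  assumes P: "P \<in> states A" and E: "E \<in> effects A" and T: "T \<in> hom Th B B'"
    and s: "s \<in> hom Th (unitS Th) (tensS Th A (tensS Th B W))"
    and e: "e \<in> hom Th (tensS Th A (tensS Th B' W)) (unitS Th)"
  shows "tpr Th (s, e, W) (parc Th (seqc Th P E) T) =
    tpr Th (seqc Th (parc Th E (idp Th (tensS Th B W))) s, seqc Th e (parc Th P (idp Th (tensS Th B' W))), W) T"
proof -
  let ?G = "parc Th T (idp Th W)"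
  have "parc Th (seqc Th P E) ?G = parc Th (seqc Th P E) (seqc Th ?G (idp Th (tensS Th B W)))"
    using T by simp
  also have "\<dots> = seqc Th (parc Th P ?G) (parc Th E (idp Th (tensS Th B W)))"
    using P E T by (intro parc_seqc) auto
  also have "parc Th P ?G = seqc Th (parc Th P (idp Th (tensS Th B' W))) ?G"
    using parc_slide_left[of P ?G] P T by simp
  finally have "parc Th (parc Th (seqc Th P E) T) (idp Th W) =
      seqc Th (seqc Th (parc Th P (idp Th (tensS Th B' W))) ?G) (parc Th E (idp Th (tensS Th B W)))"
    by (simp add: parc_assoc)
  then show ?thesis
    using P E T s e by (simp add: tpr_def seqc_assoc)
qed

lemma tpr_rank_one_id_decomp:
  assumes D: "id_decomp B D" and P: "P \<in> states A" and E: "E \<in> effects A"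
    and s: "s \<in> hom Th (unitS Th) (tensS Th A (tensS Th B W))"
    and e: "e \<in> hom Th (tensS Th A (tensS Th B W)) (unitS Th)"
  shows "tpr Th (s, e, tensS Th B W) (seqc Th P E) =
    (\<Sum>(c, P', E')\<leftarrow>D. c * tpr Th (s, e, W) (seqc Th (parc Th P P') (parc Th E E')))"
proof -
  let ?\<tau> = "(seqc Th (parc Th E (idp Th (tensS Th B W))) s, seqc Th e (parc Th P (idp Th (tensS Th B W))), W)"
  have "?\<tau> \<in> testers Th B B"
    using P E s e unfolding testers_def by simp
  have "tpr Th (s, e, tensS Th B W) (seqc Th P E) = tpr Th ?\<tau> (idp Th B)"
    using tpr_parc_rank_one[OF P E _ s e, of "idp Th B"] by (simp add: tpr_parc_idp)
  also have "\<dots> = (\<Sum>(c, P', E')\<leftarrow>D. c * tpr Th ?\<tau> (seqc Th P' E'))"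
    by (rule tpr_idp_id_decomp[OF D \<open>?\<tau> \<in> testers Th B B\<close>])
  also have "\<dots> = (\<Sum>(c, P', E')\<leftarrow>D. c * tpr Th (s, e, W) (seqc Th (parc Th P P') (parc Th E E')))"
  proof (rule sum_list_map_triples_cong)
    fix c P' E' assume "(c, P', E') \<in> set D"
    then have P': "P' \<in> states B" and E': "E' \<in> effects B"
      using id_decomp_homs[OF D] by auto
    have "parc Th (seqc Th P E) (seqc Th P' E') = seqc Th (parc Th P P') (parc Th E E')"
      using P E P' E' by (intro parc_seqc) auto
    then show "c * tpr Th ?\<tau> (seqc Th P' E') = c * tpr Th (s, e, W) (seqc Th (parc Th P P') (parc Th E E'))"
      using tpr_parc_rank_one[OF P E _ s e, of "seqc Th P' E'"] P' E' by simp
  qed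
  finally show ?thesis .
qed

definition decomp_tensor :: "(real \<times> 'p \<times> 'p) list \<Rightarrow> (real \<times> 'p \<times> 'p) list \<Rightarrow> (real \<times> 'p \<times> 'p) list" where
  "decomp_tensor DA DB =
     concat (map (\<lambda>(c, P, E). map (\<lambda>(c', P', E'). (c * c', parc Th P P', parc Th E E')) DB) DA)"

lemma set_decomp_tensor:
  "x \<in> set (decomp_tensor DA DB) \<longleftrightarrow>
   (\<exists>c P E c' P' E'. (c, P, E) \<in> set DA \<and> (c', P', E') \<in> set DB \<and>
      x = (c * c', parc Th P P', parc Th E E'))"
  unfolding decomp_tensor_def by force

lemma lc_val_decomp_tensor:
  "lc_val f (map (\<lambda>(c, P, E). (c, seqc Th P E)) (decomp_tensor DA DB)) =
   (\<Sum>(c, P, E)\<leftarrow>DA. c * (\<Sum>(c', P', E')\<leftarrow>DB. c' * f (seqc Th (parc Th P P') (parc Th E E'))))"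
  unfolding decomp_tensor_def lc_val_map_triples
  by (induction DA) (auto simp: o_def case_prod_beta mult.assoc sum_list_const_mult)

lemma id_decomp_tensS:
  assumes DA: "id_decomp A DA" and DB: "id_decomp B DB"
  shows "id_decomp (tensS Th A B) (decomp_tensor DA DB)"
  unfolding id_decomp_def
proof
  show "\<forall>(c, P, E)\<in>set (decomp_tensor DA DB). P \<in> states (tensS Th A B) \<and> E \<in> effects (tensS Th A B)"
    using id_decomp_homs[OF DA] id_decomp_homs[OF DB] by (fastforce simp: set_decomp_tensor)
  show "gpt_eq Th (tensS Th A B) (tensS Th A B) [(1, idp Th (tensS Th A B))]
      (map (\<lambda>(c, P, E). (c, seqc Th P E)) (decomp_tensor DA DB))"
    unfolding gpt_eq_def
  proof
    fix \<tau> assume "\<tau> \<in> testers Th (tensS Th A B) (tensS Th A B)"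
    then obtain s e W where \<tau>: "\<tau> = (s, e, W)"
      and s: "s \<in> hom Th (unitS Th) (tensS Th A (tensS Th B W))"
      and e: "e \<in> hom Th (tensS Th A (tensS Th B W)) (unitS Th)"
      unfolding testers_def by (auto simp: tensS_assoc)
    have "(s, e, tensS Th B W) \<in> testers Th A A"
      using s e unfolding testers_def by simp
    then have "tpr Th (s, e, tensS Th B W) (idp Th A) =
        (\<Sum>(c, P, E)\<leftarrow>DA. c * tpr Th (s, e, tensS Th B W) (seqc Th P E))"
      by (rule tpr_idp_id_decomp[OF DA])
    also have "\<dots> = (\<Sum>(c, P, E)\<leftarrow>DA. c *
        (\<Sum>(c', P', E')\<leftarrow>DB. c' * tpr Th (s, e, W) (seqc Th (parc Th P P') (parc Th E E'))))"
      using id_decomp_homs[OF DA] tpr_rank_one_id_decomp[OF DB _ _ s e]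
      by (intro sum_list_map_triples_cong) simp
    finally show "lc_val (tpr Th \<tau>) [(1, idp Th (tensS Th A B))] =
        lc_val (tpr Th \<tau>) (map (\<lambda>(c, P, E). (c, seqc Th P E)) (decomp_tensor DA DB))"
      unfolding \<tau> lc_val_decomp_tensor by (simp add: tpr_parc_idp idp_tensS)
  qed
qed

definition product_state :: "'s list \<Rightarrow> 'p \<Rightarrow> bool" where
  "product_state As P \<longleftrightarrow> (\<exists>Ps. P = parL Th Ps \<and> list_all2 (\<lambda>Q A. Q \<in> states A) Ps As)"

definition product_effect :: "'s list \<Rightarrow> 'p \<Rightarrow> bool" where
  "product_effect As E \<longleftrightarrow> (\<exists>Es. E = parL Th Es \<and> list_all2 (\<lambda>F A. F \<in> effects A) Es As)"

lemma product_id_decomp_tensL: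
  assumes "\<And>A. \<exists>D. id_decomp A D"
  shows "\<exists>D. id_decomp (tensL Th As) D \<and> (\<forall>(c, P, E)\<in>set D. product_state As P \<and> product_effect As E)"
proof (induction As)
  case Nil
  have "id_decomp (unitS Th) [(1, idp Th (unitS Th), idp Th (unitS Th))]"
    unfolding id_decomp_def gpt_eq_def by simp
  moreover have "product_state [] (idp Th (unitS Th))" and "product_effect [] (idp Th (unitS Th))"
    unfolding product_state_def product_effect_def by (simp_all add: parL_def)
  ultimately show ?case
    by (auto simp: tensL_def)
next
  case (Cons A As)
  obtain DA where DA: "id_decomp A DA"
    using assms by blast
  obtain D where D: "id_decomp (tensL Th As) D"
    and products: "\<forall>(c, P, E)\<in>set D. product_state As P \<and> product_effect As E"
    using Cons.IH by blast
  have "product_state (A # As) P \<and> product_effect (A # As) E"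
    if member: "(c, P, E) \<in> set (decomp_tensor DA D)" for c P E
  proof -
    obtain c\<^sub>1 P\<^sub>1 E\<^sub>1 c\<^sub>2 P\<^sub>2 E\<^sub>2 where "(c\<^sub>1, P\<^sub>1, E\<^sub>1) \<in> set DA" "(c\<^sub>2, P\<^sub>2, E\<^sub>2) \<in> set D"
      and "P = parc Th P\<^sub>1 P\<^sub>2" "E = parc Th E\<^sub>1 E\<^sub>2"
      using member unfolding set_decomp_tensor by blast
    moreover obtain Ps Es where "P\<^sub>2 = parL Th Ps" "list_all2 (\<lambda>Q A. Q \<in> states A) Ps As"
      and "E\<^sub>2 = parL Th Es" "list_all2 (\<lambda>F A. F \<in> effects A) Es As"
      using products calculation(2) unfolding product_state_def product_effect_def by blast
    ultimately have "P = parL Th (P\<^sub>1 # Ps) \<and> list_all2 (\<lambda>Q A. Q \<in> states A) (P\<^sub>1 # Ps) (A # As)"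
      and "E = parL Th (E\<^sub>1 # Es) \<and> list_all2 (\<lambda>F A. F \<in> effects A) (E\<^sub>1 # Es) (A # As)"
      using id_decomp_homs[OF DA] by auto
    then show ?thesis
      unfolding product_state_def product_effect_def by blast
  qed
  then show ?case
    using id_decomp_tensS[OF DA D] by auto
qed

lemma tomographically_local_if_id_decomps:
  assumes decomps: "\<And>A. \<exists>D. id_decomp A D"
  shows "tomographically_local Th"
  unfolding tomographically_local_def
proof (intro allI impI)
  fix As Bs L L'
  assume ok: "lc_ok Th (tensL Th As) (tensL Th Bs) L" and ok': "lc_ok Th (tensL Th As) (tensL Th Bs) L'"
    and products_eq: "\<forall>Ps Es. length Ps = length As \<longrightarrow> (\<forall>k<length As. Ps ! k \<in> states (As ! k)) \<longrightarrow>
       length Es = length Bs \<longrightarrow> (\<forall>k<length Bs. Es ! k \<in> effects (Bs ! k)) \<longrightarrow>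
       lc_val (\<lambda>T. prob Th (seqc Th (parL Th Es) (seqc Th T (parL Th Ps)))) L =
       lc_val (\<lambda>T. prob Th (seqc Th (parL Th Es) (seqc Th T (parL Th Ps)))) L'"
  obtain DX where DX: "id_decomp (tensL Th As) DX"
    and DX_products: "\<forall>(c, P, E)\<in>set DX. product_state As P"
    using product_id_decomp_tensL[OF decomps, of As] by fast
  obtain DY where DY: "id_decomp (tensL Th Bs) DY"
    and DY_products: "\<forall>(c, P, E)\<in>set DY. product_effect Bs E"
    using product_id_decomp_tensL[OF decomps, of Bs] by fast
  show "gpt_eq Th (tensL Th As) (tensL Th Bs) L L'"
    unfolding gpt_eq_def
  proof
    fix \<tau> assume \<tau>: "\<tau> \<in> testers Th (tensL Th As) (tensL Th Bs)"
    show "lc_val (tpr Th \<tau>) L = lc_val (tpr Th \<tau>) L'"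
    proof (rule lc_val_eq_if_combination[where xs = DY and ys = DX
          and a = "\<lambda>(c, P, E) (c', P', E'). c * c' * tpr Th \<tau> (seqc Th P E')"
          and g = "\<lambda>(c, P, E) (c', P', E') T. prob Th (seqc Th E (seqc Th T P'))"])
      fix c T assume "(c, T) \<in> set L \<union> set L'"
      then have "T \<in> hom Th (tensL Th As) (tensL Th Bs)"
        using ok ok' unfolding lc_ok_def by auto
      then show "tpr Th \<tau> T = (\<Sum>x\<leftarrow>DY. \<Sum>y\<leftarrow>DX.
          (case x of (c, P, E) \<Rightarrow> \<lambda>(c', P', E'). c * c' * tpr Th \<tau> (seqc Th P E')) y *
          (case x of (c, P, E) \<Rightarrow> \<lambda>(c', P', E') T. prob Th (seqc Th E (seqc Th T P'))) y T)"
        using tpr_expansion[OF DX DY _ \<tau>] by (simp add: split_def)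
    next
      fix x y assume "x \<in> set DY" and "y \<in> set DX"
      obtain c P E c' P' E' where x: "x = (c, P, E)" and y: "y = (c', P', E')"
        by (metis prod_cases3)
      then have "product_effect Bs E" and "product_state As P'"
        using DX_products DY_products \<open>x \<in> set DY\<close> \<open>y \<in> set DX\<close> by auto
      then obtain Es Ps where "E = parL Th Es" "list_all2 (\<lambda>F A. F \<in> effects A) Es Bs"
        and "P' = parL Th Ps" "list_all2 (\<lambda>Q A. Q \<in> states A) Ps As"
        unfolding product_state_def product_effect_def by blast
      then show "lc_val ((case x of (c, P, E) \<Rightarrow> \<lambda>(c', P', E') T. prob Th (seqc Th E (seqc Th T P'))) y) L =
          lc_val ((case x of (c, P, E) \<Rightarrow> \<lambda>(c', P', E') T. prob Th (seqc Th E (seqc Th T P'))) y) L'"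
        using products_eq unfolding x y list_all2_conv_all_nth by auto
    qed
  qed
qed

lemma tomographically_local_if_id_expansions:
  assumes expansions: "\<And>A m P E M. lin_indep_spanning_states Th A m P \<Longrightarrow> lin_indep_spanning_effects Th A m E \<Longrightarrow>
      M \<in> carrier_mat m m \<Longrightarrow> M * Nmat Th m P E = 1\<^sub>m m \<Longrightarrow> Nmat Th m P E * M = 1\<^sub>m m \<Longrightarrow>
      gpt_eq Th A A [(1, idp Th A)] (id_expansion Th m M P E)"
  shows "tomographically_local Th"
proof (rule tomographically_local_if_id_decomps)
  fix A
  obtain m P E where P: "lin_indep_spanning_states Th A m P" and E: "lin_indep_spanning_effects Th A m E"
    by (rule lin_indep_spanning_bases_exist[where A = A]) blast
  obtain M where "M \<in> carrier_mat m m" "Nmat Th m P E * M = 1\<^sub>m m" "M * Nmat Th m P E = 1\<^sub>m m"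
    using det_nonzero_imp_inverse[OF Nmat_carrier det_Nmat_nonzero[OF P E]] by blast
  then have "gpt_eq Th A A [(1, idp Th A)] (id_expansion Th m M P E)"
    using expansions[OF P E] by blast
  then show "\<exists>D. id_decomp A D"
    using id_decomp_if_id_expansion P E
    unfolding lin_indep_spanning_states_iff lin_indep_spanning_effects_iff pairing_basis_def by blast
qed

end

theorem lemma2:
  fixes Th :: "('s, 'p) optheory"
  assumes "operational_theory Th"
  shows "tomographically_local Th \<longleftrightarrow>
    (\<forall>A m Ps Es. lin_indep_spanning_states Th A m Ps \<longrightarrow> lin_indep_spanning_effects Th A m Es \<longrightarrow>
       invertible_mat (Nmat Th m Ps Es) \<and>
       (\<forall>M \<in> carrier_mat m m. M * Nmat Th m Ps Es = 1\<^sub>m m \<and> Nmat Th m Ps Es * M = 1\<^sub>m m \<longrightarrow>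
          gpt_eq Th A A [(1, idp Th A)] (id_expansion Th m M Ps Es)))"
proof -
  interpret operational Th
    by (rule operational.intro) (fact assms)
  show ?thesis
  proof (intro iffI allI impI conjI ballI, goal_cases)
    case (1 A m P E)
    show ?case
      by (rule invertible_mat_if_det_nonzero[OF Nmat_carrier det_Nmat_nonzero[OF 1(2,3)]])
  next
    case (2 A m P E M)
    then show ?case
      using id_expansion_if_tomographically_local by blast
  next
    case 3
    then show ?case
      by (intro tomographically_local_if_id_expansions) blast
  qed
qed

end
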